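(* Let $X$ be an $n$-dimensional real normed space and let $Y \subseteq X$ be a linear subspace of dimension $k$, where $1 \leq k \leq n-1$. Suppose that $x_0 \in X \setminus Y$ and $\{f_1, f_2, \ldots, f_l\} \subseteq \mathrm{ext}\, B_{X^*}$ is a minimal $I$-set for $Y$ with respect to $x_0$, where $l \geq 2$. Then the functionals $f_1|_Y, f_2|_Y, \ldots, f_{l-1}|_Y$ are linearly independent in $Y^*$.
   Context: $P_Y(x)=\{y\in Y:\|x-y\|=\mathrm{dist}(x,Y)\}$ is the set of best approximations of $x$ in $Y$. For $x_0\in X\setminus Y$, a set of functionals $\{f_1,\dots,f_l\}\subseteq \mathrm{ext}\,B_{X^*}$ (extreme points of the dual unit ball) is an $I$-set for $Y$ with respect to $x_0$ if there exist $y_0\in P_Y(x_0)$ and positive reals $\alpha_1,\dots,\alpha_l$ with $\sum_i\alpha_i=1$ such that $f_i(x_0-y_0)=\|x_0-y_0\|$ for all $i$ and $\sum_{i=1}^l\alpha_i f_i(y)=0$ for all $y\in Y$. An $I$-set is minimal if no proper subset of it is an $I$-set for $Y$ with respect to $x_0$. *)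

theory Defs
  imports "HOL-Analysis.Analysis"
begin

(* Dual space X* is modelled by the type of bounded linear functionals
   blinfun (operator norm); its closed unit ball is cball 0 1. *)

definition best_approx :: "'a::real_normed_vector set \<Rightarrow> 'a \<Rightarrow> 'a set" where
  "best_approx Y x = {y \<in> Y. norm (x - y) = infdist x Y}"

definition I_set :: "'a::real_normed_vector set \<Rightarrow> 'a \<Rightarrow> ('a \<Rightarrow>\<^sub>L real) set \<Rightarrow> bool" where
  "I_set Y x0 F \<longleftrightarrow> finite F \<and> (\<forall>f\<in>F. f extreme_point_of (cball 0 1)) \<and>
     (\<exists>y0 \<in> best_approx Y x0. \<exists>\<alpha> :: ('a \<Rightarrow>\<^sub>L real) \<Rightarrow> real.
        (\<forall>f\<in>F. \<alpha> f > 0) \<and> (\<Sum>f\<in>F. \<alpha> f) = 1 \<and>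
        (\<forall>f\<in>F. blinfun_apply f (x0 - y0) = norm (x0 - y0)) \<and>
        (\<forall>y\<in>Y. (\<Sum>f\<in>F. \<alpha> f * blinfun_apply f y) = 0))"

definition minimal_I_set :: "'a::real_normed_vector set \<Rightarrow> 'a \<Rightarrow> ('a \<Rightarrow>\<^sub>L real) set \<Rightarrow> bool" where
  "minimal_I_set Y x0 F \<longleftrightarrow> I_set Y x0 F \<and> (\<forall>G. G \<subset> F \<longrightarrow> \<not> I_set Y x0 G)"

end

theory Submission
  imports Defs
begin

(* If the restrictions of f_1, ..., f_(l-1) to Y satisfied a nontrivial relation
   sum c_i f_i = 0 (w.l.o.g. some c_i > 0), then with c_l = 0 the weights
   alpha_i - t c_i still annihilate Y for every t.  Taking t as large as possible
   with all of them nonnegative, some weight drops to zero while that of f_l stays alpha_l > 0;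
   renormalising the positive weights yields an I-set properly contained in the
   minimal one. *)

lemma exists_maximal_scaling_below:
  fixes \<alpha> \<beta> :: "'b \<Rightarrow> real"
  assumes "finite F" and "\<forall>g\<in>F. 0 < \<alpha> g" and "g\<^sub>0 \<in> F" and "0 < \<beta> g\<^sub>0"
  obtains t where "0 < t" and "\<forall>g\<in>F. t * \<beta> g \<le> \<alpha> g" and "\<exists>g\<in>F. t * \<beta> g = \<alpha> g"
proof -
  define P where "P = {g\<in>F. 0 < \<beta> g}"
  define t where "t = Min ((\<lambda>g. \<alpha> g / \<beta> g) ` P)"
  have "finite P" and "g\<^sub>0 \<in> P"
    using assms unfolding P_def by auto
  then have "t \<in> (\<lambda>g. \<alpha> g / \<beta> g) ` P"
    unfolding t_def by (intro Min_in) auto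
  then obtain g where "g \<in> P" and t_eq: "t = \<alpha> g / \<beta> g"
    by blast
  have t_le: "t \<le> \<alpha> h / \<beta> h" if "h \<in> P" for h
    unfolding t_def using \<open>finite P\<close> that by simp
  have "0 < t"
    using \<open>g \<in> P\<close> assms(2) unfolding t_eq P_def by auto
  moreover have "t * \<beta> h \<le> \<alpha> h" if "h \<in> F" for h
  proof (cases "0 < \<beta> h")
    case True
    then show ?thesis
      using t_le[of h] that by (simp add: P_def pos_le_divide_eq)
  next
    case False
    then have "t * \<beta> h \<le> 0"
      using \<open>0 < t\<close> by (simp add: mult_nonneg_nonpos)
    moreover have "0 < \<alpha> h"
      using assms(2) that by blast
    ultimately show ?thesis
      by linarith
  qed
  moreover have "t * \<beta> g = \<alpha> g"
    using \<open>g \<in> P\<close> unfolding t_eq P_def by auto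
  ultimately show ?thesis
    using that \<open>g \<in> P\<close> unfolding P_def by blast
qed

lemma I_set_positive_part:
  fixes w :: "('a::real_normed_vector \<Rightarrow>\<^sub>L real) \<Rightarrow> real"
  assumes "finite F" and "\<forall>g\<in>F. g extreme_point_of (cball 0 1)"
    and "y\<^sub>0 \<in> best_approx Y x\<^sub>0" and "\<forall>g\<in>F. blinfun_apply g (x\<^sub>0 - y\<^sub>0) = norm (x\<^sub>0 - y\<^sub>0)"
    and "\<forall>g\<in>F. 0 \<le> w g" and "h \<in> F" and "0 < w h"
    and "\<forall>y\<in>Y. (\<Sum>g\<in>F. w g * blinfun_apply g y) = 0"
  shows "I_set Y x\<^sub>0 {g\<in>F. 0 < w g}"
proof -
  define G where "G = {g\<in>F. 0 < w g}"
  have sum_G: "(\<Sum>g\<in>G. w g * u g) = (\<Sum>g\<in>F. w g * u g)" for u :: "_ \<Rightarrow> real"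
    unfolding G_def using assms(1,5)
    by (intro sum.mono_neutral_left) (auto simp: order.order_iff_strict)
  define S where "S = (\<Sum>g\<in>G. w g)"
  have "finite G" and "h \<in> G"
    using assms unfolding G_def by auto
  then have "0 < S"
    unfolding S_def G_def by (intro sum_pos2[of _ h]) auto
  show ?thesis
    unfolding I_set_def G_def[symmetric]
  proof (intro conjI bexI[OF _ assms(3)] exI[of _ "\<lambda>g. w g / S"])
    show "finite G"
      by fact
    show "\<forall>g\<in>G. g extreme_point_of (cball 0 1)"
      using assms(2) unfolding G_def by blast
    show "\<forall>g\<in>G. 0 < w g / S"
      using \<open>0 < S\<close> unfolding G_def by simp
    show "(\<Sum>g\<in>G. w g / S) = 1"
      using \<open>0 < S\<close> unfolding S_def by (simp flip: sum_divide_distrib)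
    show "\<forall>g\<in>G. blinfun_apply g (x\<^sub>0 - y\<^sub>0) = norm (x\<^sub>0 - y\<^sub>0)"
      using assms(4) unfolding G_def by blast
    show "\<forall>y\<in>Y. (\<Sum>g\<in>G. w g / S * blinfun_apply g y) = 0"
      using sum_G assms(8) by (simp add: sum_divide_distrib[symmetric])
  qed
qed

lemma I_set_reduce_by_relation:
  fixes \<beta> :: "('a::real_normed_vector \<Rightarrow>\<^sub>L real) \<Rightarrow> real"
  assumes "I_set Y x\<^sub>0 F"
    and "\<forall>y\<in>Y. (\<Sum>g\<in>F. \<beta> g * blinfun_apply g y) = 0"
    and "g\<^sub>0 \<in> F" and "0 < \<beta> g\<^sub>0" and "h \<in> F" and "\<beta> h \<le> 0"
  shows "\<exists>G \<subset> F. I_set Y x\<^sub>0 G"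
proof -
  obtain y\<^sub>0 \<alpha> where "finite F" and extreme: "\<forall>g\<in>F. g extreme_point_of (cball 0 1)"
    and "y\<^sub>0 \<in> best_approx Y x\<^sub>0" and \<alpha>_pos: "\<forall>g\<in>F. 0 < \<alpha> g"
    and norming: "\<forall>g\<in>F. blinfun_apply g (x\<^sub>0 - y\<^sub>0) = norm (x\<^sub>0 - y\<^sub>0)"
    and \<alpha>_Y: "\<forall>y\<in>Y. (\<Sum>g\<in>F. \<alpha> g * blinfun_apply g y) = 0"
    using assms(1) unfolding I_set_def by blast
  obtain t where "0 < t" and t_le: "\<forall>g\<in>F. t * \<beta> g \<le> \<alpha> g"
    and "\<exists>g\<in>F. t * \<beta> g = \<alpha> g"
    using exists_maximal_scaling_below[of F \<alpha> g\<^sub>0 \<beta>] \<open>finite F\<close> \<alpha>_pos assms(3,4) by blast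
  define w where "w g = \<alpha> g - t * \<beta> g" for g
  define G where "G = {g\<in>F. 0 < w g}"
  have "G \<subset> F"
    using \<open>\<exists>g\<in>F. t * \<beta> g = \<alpha> g\<close> unfolding G_def w_def by force
  have "t * \<beta> h \<le> 0"
    using assms(6) \<open>0 < t\<close> by (simp add: mult_nonneg_nonpos)
  then have "0 < w h"
    using \<alpha>_pos assms(5) unfolding w_def by fastforce
  moreover have "\<forall>g\<in>F. 0 \<le> w g"
    using t_le unfolding w_def by simp
  moreover have "\<forall>y\<in>Y. (\<Sum>g\<in>F. w g * blinfun_apply g y) = 0"
    using \<alpha>_Y assms(2)
    by (simp add: w_def left_diff_distrib sum_subtractf mult.assoc flip: sum_distrib_left)
  ultimately have "I_set Y x\<^sub>0 G"
    unfolding G_def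
    using I_set_positive_part[OF \<open>finite F\<close> extreme \<open>y\<^sub>0 \<in> _\<close> norming _ assms(5)] by blast
  with \<open>G \<subset> F\<close> show ?thesis
    by blast
qed

lemma minimal_I_set_relation_vanishes:
  fixes \<beta> :: "('a::real_normed_vector \<Rightarrow>\<^sub>L real) \<Rightarrow> real"
  assumes "minimal_I_set Y x\<^sub>0 F"
    and "\<forall>y\<in>Y. (\<Sum>g\<in>F. \<beta> g * blinfun_apply g y) = 0"
    and "h \<in> F" and "\<beta> h = 0"
  shows "\<forall>g\<in>F. \<beta> g = 0"
proof (rule ccontr)
  assume "\<not> (\<forall>g\<in>F. \<beta> g = 0)"
  then obtain g\<^sub>0 where "g\<^sub>0 \<in> F" and "\<beta> g\<^sub>0 \<noteq> 0"
    by blast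
  have "I_set Y x\<^sub>0 F" and no_smaller: "\<forall>G \<subset> F. \<not> I_set Y x\<^sub>0 G"
    using assms(1) unfolding minimal_I_set_def by auto
  have negated: "\<forall>y\<in>Y. (\<Sum>g\<in>F. (- \<beta> g) * blinfun_apply g y) = 0"
    using assms(2) by (simp add: sum_negf)
  consider "0 < \<beta> g\<^sub>0" | "0 < - \<beta> g\<^sub>0"
    using \<open>\<beta> g\<^sub>0 \<noteq> 0\<close> by linarith
  then have "\<exists>G \<subset> F. I_set Y x\<^sub>0 G"
  proof cases
    case 1
    then show ?thesis
      using I_set_reduce_by_relation[OF \<open>I_set Y x\<^sub>0 F\<close> assms(2) \<open>g\<^sub>0 \<in> F\<close> _ assms(3)] assms(4)
      by simp
  next
    case 2
    then show ?thesis
      using I_set_reduce_by_relation[OF \<open>I_set Y x\<^sub>0 F\<close> negated \<open>g\<^sub>0 \<in> F\<close> _ assms(3)] assms(4)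
      by simp
  qed
  then show False
    using no_smaller by blast
qed

theorem mainTheorem13:
  fixes Y :: "'a::real_normed_vector set" and x0 :: 'a
    and f :: "nat \<Rightarrow> ('a \<Rightarrow>\<^sub>L real)" and n k l :: nat
  assumes "dim (UNIV :: 'a set) = n"
    and "subspace Y" and "dim Y = k" and "1 \<le> k" and "k \<le> n - 1"
    and "x0 \<notin> Y"
    and "2 \<le> l" and "inj_on f {..<l}"
    and "minimal_I_set Y x0 (f ` {..<l})"
  shows "\<forall>c :: nat \<Rightarrow> real.
           (\<forall>y\<in>Y. (\<Sum>i<l - 1. c i * blinfun_apply (f i) y) = 0) \<longrightarrow> (\<forall>i<l - 1. c i = 0)"
proof (rule allI, rule impI)
  fix c :: "nat \<Rightarrow> real"
  assume relation: "\<forall>y\<in>Y. (\<Sum>i<l - 1. c i * blinfun_apply (f i) y) = 0"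
  define c' where "c' i = (if i < l - 1 then c i else 0)" for i
  define \<beta> where "\<beta> g = c' (inv_into {..<l} f g)" for g
  have \<beta>_f: "\<beta> (f i) = c' i" if "i < l" for i
    using assms(8) that unfolding \<beta>_def by simp
  have "(\<Sum>g\<in>f ` {..<l}. \<beta> g * blinfun_apply g y) = (\<Sum>i<l - 1. c i * blinfun_apply (f i) y)" for y
  proof -
    have "(\<Sum>g\<in>f ` {..<l}. \<beta> g * blinfun_apply g y) = (\<Sum>i<l. c' i * blinfun_apply (f i) y)"
      using assms(8) \<beta>_f by (simp add: sum.reindex)
    also have "\<dots> = (\<Sum>i<l - 1. c i * blinfun_apply (f i) y)"
      by (rule sum.mono_neutral_cong_right) (auto simp: c'_def)
    finally show ?thesis .
  qed
  then have "\<forall>g\<in>f ` {..<l}. \<beta> g = 0"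
    using minimal_I_set_relation_vanishes[OF assms(9), of \<beta> "f (l - 1)"] relation assms(7) \<beta>_f
    by (simp add: c'_def)
  then have "c' i = 0" if "i < l" for i
    using \<beta>_f that by fastforce
  then show "\<forall>i<l - 1. c i = 0"
    unfolding c'_def by (metis diff_le_self order_less_le_trans)
qed

end
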